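(* For every $\lambda\in\mathcal{P}^+$, $$D_\pi\,m_\lambda=t^{\langle\pi,\rho\rangle}\sum_{\nu\in W(\lambda)}\Big(\sum_{\tau\in W(\pi)}t^{\langle\tau,\rho\rangle}q^{\langle\tau,\nu\rangle}\Big)\chi_\nu .$$
   Context: $E$ real Euclidean space spanned by an irreducible reduced root system $R$ with Weyl group $W$, positive roots $R^+$; $\mathcal{P}$ weight lattice, $\mathcal{P}^+$ dominant weights; $W(\mu)$ denotes a $W$-orbit and $W_\mu$ a stabilizer. $\pi\in E$ is a minuscule weight of the dual root system, i.e. $\langle\pi,\alpha\rangle\in\{0,1\}$ for all $\alpha\in R^+$ (assumed to exist). $q,t$ are indeterminates (powers with real exponents understood formally, or $q,t>0$ real). Formal exponentials $e^\lambda$ with $e^\lambda e^\mu=e^{\lambda+\mu}$; $m_\lambda=\sum_{\mu\in W(\lambda)}e^\mu$. For $x\in E$, $T_{x,q}e^\lambda=q^{\langle\lambda,x\rangle}e^\lambda$. The Macdonald operator is $D_\pi=\frac{1}{|W_\pi|}\sum_{w\in W}\Big(\prod_{\alpha\in R^+}\frac{1-t^{\langle\pi,\alpha\rangle}e^{w(\alpha)}}{1-e^{w(\alpha)}}\Big)T_{w(\pi),q}$. $\rho=\frac12\sum_{\alpha\in R^+}\alpha$, $\delta=\prod_{\alpha\in R^+}(e^{\alpha/2}-e^{-\alpha/2})$, and for any $\nu\in\mathcal{P}$ the Weyl character is $\chi_\nu=\delta^{-1}\sum_{w\in W}\det(w)e^{w(\nu+\rho)}$. *)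

theory Defs
  imports "HOL-Analysis.Analysis"
begin

definition refl_root :: "real^'n \<Rightarrow> real^'n \<Rightarrow> real^'n" where
  "refl_root a x = x - (2 * (x \<bullet> a) / (a \<bullet> a)) *\<^sub>R a"

definition root_system :: "(real^'n) set \<Rightarrow> bool" where
  "root_system R \<longleftrightarrow> finite R \<and> 0 \<notin> R \<and> span R = UNIV \<and>
     (\<forall>a\<in>R. \<forall>b\<in>R. refl_root a b \<in> R) \<and>
     (\<forall>a\<in>R. \<forall>b\<in>R. 2 * (b \<bullet> a) / (a \<bullet> a) \<in> \<int>)"

definition reduced_rs :: "(real^'n) set \<Rightarrow> bool" where
  "reduced_rs R \<longleftrightarrow> (\<forall>a\<in>R. \<forall>c::real. c *\<^sub>R a \<in> R \<longrightarrow> c = 1 \<or> c = -1)"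

definition irreducible_rs :: "(real^'n) set \<Rightarrow> bool" where
  "irreducible_rs R \<longleftrightarrow> \<not> (\<exists>A B. A \<union> B = R \<and> A \<inter> B = {} \<and> A \<noteq> {} \<and> B \<noteq> {} \<and>
      (\<forall>a\<in>A. \<forall>b\<in>B. a \<bullet> b = 0))"

definition positive_system :: "(real^'n) set \<Rightarrow> (real^'n) set \<Rightarrow> bool" where
  "positive_system R Rp \<longleftrightarrow> (\<exists>g. (\<forall>a\<in>R. a \<bullet> g \<noteq> 0) \<and> Rp = {a\<in>R. a \<bullet> g > 0})"

inductive_set weyl_group :: "(real^'n) set \<Rightarrow> (real^'n \<Rightarrow> real^'n) set" for R where
  weyl_id: "id \<in> weyl_group R"
| weyl_step: "w \<in> weyl_group R \<Longrightarrow> a \<in> R \<Longrightarrow> refl_root a \<circ> w \<in> weyl_group R"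

definition weight_lattice :: "(real^'n) set \<Rightarrow> (real^'n) set" where
  "weight_lattice R = {l. \<forall>a\<in>R. 2 * (l \<bullet> a) / (a \<bullet> a) \<in> \<int>}"

definition dominant_weights :: "(real^'n) set \<Rightarrow> (real^'n) set \<Rightarrow> (real^'n) set" where
  "dominant_weights R Rp = {l \<in> weight_lattice R. \<forall>a\<in>Rp. l \<bullet> a \<ge> 0}"

definition dual_minuscule :: "(real^'n) set \<Rightarrow> real^'n \<Rightarrow> bool" where
  "dual_minuscule Rp p \<longleftrightarrow> (\<forall>a\<in>Rp. p \<bullet> a = 0 \<or> p \<bullet> a = 1)"

definition worbit :: "(real^'n) set \<Rightarrow> real^'n \<Rightarrow> (real^'n) set" where
  "worbit R m = (\<lambda>w. w m) ` weyl_group R"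

definition wstab :: "(real^'n) set \<Rightarrow> real^'n \<Rightarrow> (real^'n \<Rightarrow> real^'n) set" where
  "wstab R m = {w \<in> weyl_group R. w m = m}"

definition rho :: "(real^'n) set \<Rightarrow> real^'n" where
  "rho Rp = (1/2) *\<^sub>R (\<Sum>a\<in>Rp. a)"

text \<open>Formal exponentials are realised as functions on E: e^l is y \<mapsto> exp (l \<bullet> y).
  Thus T_{x,q} becomes translation by (ln q) x; rational expressions are evaluated
  at regular points y.\<close>

definition sym_monomial :: "(real^'n) set \<Rightarrow> real^'n \<Rightarrow> real^'n \<Rightarrow> real" where
  "sym_monomial R l y = (\<Sum>m\<in>worbit R l. exp (m \<bullet> y))"

definition weyl_delta :: "(real^'n) set \<Rightarrow> real^'n \<Rightarrow> real" where
  "weyl_delta Rp y = (\<Prod>a\<in>Rp. exp ((a \<bullet> y) / 2) - exp (- (a \<bullet> y) / 2))"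

definition weyl_char :: "(real^'n) set \<Rightarrow> (real^'n) set \<Rightarrow> real^'n \<Rightarrow> real^'n \<Rightarrow> real" where
  "weyl_char R Rp v y =
     (\<Sum>w\<in>weyl_group R. det (matrix w) * exp (w (v + rho Rp) \<bullet> y)) / weyl_delta Rp y"

definition macdonald_op ::
  "(real^'n) set \<Rightarrow> (real^'n) set \<Rightarrow> real^'n \<Rightarrow> real \<Rightarrow> real \<Rightarrow> (real^'n \<Rightarrow> real) \<Rightarrow> real^'n \<Rightarrow> real" where
  "macdonald_op R Rp p q t f y =
     (1 / real (card (wstab R p))) *
     (\<Sum>w\<in>weyl_group R.
        (\<Prod>a\<in>Rp. (1 - t powr (p \<bullet> a) * exp (w a \<bullet> y)) / (1 - exp (w a \<bullet> y)))
        * f (y + ln q *\<^sub>R w p))"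

end

theory Submission
  imports Defs "HOL-Real_Asymp.Real_Asymp"
begin

text \<open>With \<open>f x = e^(x/2) - e^(-x/2)\<close>, each factor \<open>(1 - t^k e^x) / (1 - e^x)\<close> of the
  operator equals \<open>t^(k/2) f (x + k ln t) / f x\<close>. Hence, the Weyl denominator
  \<open>\<delta> = \<Prod>\<^sub>\<alpha> f \<alpha>\<close> being \<open>W\<close>-alternating, the product attached to \<open>w \<in> W\<close> is
  \<open>t^\<langle>\<pi>,\<rho>\<rangle> \<delta> (y + ln t \<cdot> w \<pi>) / \<delta> y\<close>. The Weyl denominator formula writes \<open>\<delta>\<close> as the
  alternant \<open>\<Sum>\<^sub>w det w \<cdot> e^(w \<rho>)\<close>, so the operator applied to \<open>m\<^sub>\<lambda>\<close> becomes a triple sum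
  over \<open>W \<times> W \<times> W(\<lambda>)\<close>; reindexing by the group action regroups it into alternants of
  \<open>\<nu> + \<rho>\<close>, \<open>\<nu> \<in> W(\<lambda>)\<close>, and orbit--stabiliser turns the remaining sum over \<open>W\<close> into
  one over \<open>W(\<pi>)\<close>.

  The denominator formula itself comes from antisymmetrising the expansion
  \<open>\<delta> = \<Sum>\<^sub>S (-1)^|S| e^(\<rho> - \<Sum>S)\<close> over sets \<open>S\<close> of positive roots: every \<open>\<rho> - \<Sum>S\<close>
  is singular or \<open>W\<close>-conjugate to \<open>\<rho>\<close>, so \<open>|W| \<delta>\<close> is a constant multiple of the
  alternant of \<open>\<rho>\<close>, and the constant is read off from the growth along the ray \<open>s \<rho>\<close>.\<close>

section \<open>Reflections\<close>

lemma linear_refl_root: "linear (refl_root a)"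
  unfolding refl_root_def
  by (rule linearI) (auto simp: inner_add_left algebra_simps scaleR_add_left add_divide_distrib)

lemma refl_root_refl_root [simp]: "a \<noteq> 0 \<Longrightarrow> refl_root a (refl_root a x) = x"
  unfolding refl_root_def by (simp add: inner_diff_left algebra_simps)

lemma inner_refl_root: "a \<noteq> 0 \<Longrightarrow> refl_root a x \<bullet> refl_root a z = x \<bullet> z"
  unfolding refl_root_def by (simp add: inner_diff_left inner_diff_right algebra_simps inner_commute)

lemma inner_refl_root_right: "a \<noteq> 0 \<Longrightarrow> x \<bullet> refl_root a z = refl_root a x \<bullet> z"
  unfolding refl_root_def by (simp add: inner_diff_left inner_diff_right inner_commute)

lemma refl_root_self: "a \<noteq> 0 \<Longrightarrow> refl_root a a = - a"
  unfolding refl_root_def by (simp add: vec_eq_iff)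

lemma refl_root_orthogonal: "x \<bullet> a = 0 \<Longrightarrow> refl_root a x = x"
  unfolding refl_root_def by simp

lemma refl_root_uminus: "refl_root (- a) = refl_root a"
  unfolding refl_root_def by auto

lemma refl_root_scaleR: "c \<noteq> 0 \<Longrightarrow> refl_root (c *\<^sub>R a) = refl_root a"
  unfolding refl_root_def by (auto simp: fun_eq_iff field_simps)

lemma isometry_refl_root_conj:
  assumes "linear f" and "\<And>x z. f x \<bullet> f z = x \<bullet> z"
  shows "f (refl_root a x) = refl_root (f a) (f x)"
proof -
  have "f (refl_root a x) = f x - (2 * (x \<bullet> a) / (a \<bullet> a)) *\<^sub>R f a"
    unfolding refl_root_def using assms(1) by (simp add: linear_diff linear_scale)
  then show ?thesis unfolding refl_root_def by (simp add: assms(2))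
qed

lemma det_matrix_comp:
  fixes f g :: "real^'n \<Rightarrow> real^'n"
  shows "linear f \<Longrightarrow> linear g \<Longrightarrow> det (matrix (f \<circ> g)) = det (matrix f) * det (matrix g)"
  by (simp add: matrix_compose det_mul)

lemma det_refl_root_axis: "det (matrix (refl_root (axis k (1::real)))) = -1"
proof -
  let ?A = "matrix (refl_root (axis k (1::real)))"
  have "refl_root (axis k 1) (axis j 1) = (if j = k then - axis k 1 else axis j (1::real))" for j
    unfolding refl_root_def by (simp add: inner_axis_axis vec_eq_iff)
  then have entry: "?A $ i $ j = (if i = j then (if j = k then -1 else 1) else 0)" for i j
    unfolding matrix_def by (auto simp: axis_def)
  have "det ?A = (\<Prod>i\<in>UNIV. ?A $ i $ i)"
    by (rule det_diagonal) (simp add: entry)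
  also have "\<dots> = -1"
    by (simp add: entry prod.If_cases)
  finally show ?thesis .
qed

text \<open>Conjugating by an isometry that maps \<open>a\<close> to a multiple of a coordinate axis
  reduces the claim to a diagonal matrix.\<close>
lemma det_refl_root:
  assumes a: "a \<noteq> (0::real^'n)"
  shows "det (matrix (refl_root a)) = -1"
proof -
  fix k :: 'n
  have "norm a = norm (norm a *\<^sub>R axis k (1::real))" by simp
  then obtain f where f: "orthogonal_transformation f" "f a = norm a *\<^sub>R axis k (1::real)"
    using orthogonal_transformation_exists by metis
  have lf: "linear f" and fi: "\<And>x z. f x \<bullet> f z = x \<bullet> z"
    using f(1) unfolding orthogonal_transformation_def by auto
  have "refl_root (f a) = refl_root (axis k 1)"
    using f(2) refl_root_scaleR[of "norm a" "axis k 1"] a by simp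
  then have conj: "f \<circ> refl_root a = refl_root (axis k 1) \<circ> f"
    using isometry_refl_root_conj[OF lf fi] by (auto simp: fun_eq_iff)
  have "det (matrix f) * det (matrix (refl_root a)) = - det (matrix f)"
    using det_matrix_comp[OF lf linear_refl_root, of a] det_matrix_comp[OF linear_refl_root lf]
      det_refl_root_axis[of k] conj by simp
  moreover have "det (matrix f) \<noteq> 0"
    using f(1) det_orthogonal_matrix orthogonal_transformation_matrix by fastforce
  ultimately show ?thesis by (metis mult_cancel_left mult_minus1_right)
qed

primrec refl_word :: "(real^'n) list \<Rightarrow> real^'n \<Rightarrow> real^'n" where
  "refl_word [] = id"
| "refl_word (a # xs) = refl_root a \<circ> refl_word xs"

lemma refl_word_append: "refl_word (xs @ ys) = refl_word xs \<circ> refl_word ys"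
  by (induction xs) (auto simp: comp_assoc)

lemma refl_word_rev: "0 \<notin> set xs \<Longrightarrow> refl_word (rev xs) (refl_word xs x) = x"
  by (induction xs arbitrary: x) (auto simp: refl_word_append)

section \<open>The Weyl group\<close>

locale root_sys =
  fixes R :: "(real^'n) set"
  assumes root_system: "root_system R"
begin

abbreviation W where "W \<equiv> weyl_group R"

lemma finite_roots: "finite R"
  using root_system by (simp add: root_system_def)

lemma root_nonzero: "a \<in> R \<Longrightarrow> a \<noteq> 0"
  using root_system by (auto simp: root_system_def)

lemma span_roots: "span R = UNIV"
  using root_system by (simp add: root_system_def)

lemma refl_root_in_roots: "a \<in> R \<Longrightarrow> b \<in> R \<Longrightarrow> refl_root a b \<in> R"
  using root_system by (simp add: root_system_def)

lemma cartan_integer: "a \<in> R \<Longrightarrow> b \<in> R \<Longrightarrow> 2 * (b \<bullet> a) / (a \<bullet> a) \<in> \<int>"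
  using root_system by (simp add: root_system_def)

lemma uminus_root: "a \<in> R \<Longrightarrow> - a \<in> R"
  using refl_root_in_roots[of a a] refl_root_self[of a] root_nonzero by auto

lemma id_in_weyl: "id \<in> W"
  by (rule weyl_group.weyl_id)

lemma refl_root_in_weyl: "a \<in> R \<Longrightarrow> refl_root a \<in> W"
  using weyl_group.weyl_step[OF weyl_group.weyl_id, of a R] by (metis comp_id)

lemma comp_in_weyl: "w1 \<in> W \<Longrightarrow> w2 \<in> W \<Longrightarrow> w1 \<circ> w2 \<in> W"
  by (induction rule: weyl_group.induct) (auto simp: comp_assoc intro: weyl_group.intros)

lemma refl_word_in_weyl: "set xs \<subseteq> R \<Longrightarrow> refl_word xs \<in> W"
  by (induction xs) (auto intro: weyl_group.intros)

lemma linear_weyl: "w \<in> W \<Longrightarrow> linear w"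
proof (induction rule: weyl_group.induct)
  case weyl_id
  show ?case by (rule linear_id)
next
  case (weyl_step w a)
  show ?case by (rule linear_compose[OF weyl_step.IH linear_refl_root])
qed

lemma inner_weyl [simp]: "w \<in> W \<Longrightarrow> w x \<bullet> w z = x \<bullet> z"
  by (induction arbitrary: x z rule: weyl_group.induct) (auto simp: inner_refl_root root_nonzero)

lemma weyl_root: "w \<in> W \<Longrightarrow> a \<in> R \<Longrightarrow> w a \<in> R"
  by (induction arbitrary: a rule: weyl_group.induct) (auto simp: refl_root_in_roots)

lemma weyl_refl_root_conj: "w \<in> W \<Longrightarrow> w (refl_root a x) = refl_root (w a) (w x)"
  by (rule isometry_refl_root_conj) (auto simp: linear_weyl)

lemma weyl_inverse_exists: "w \<in> W \<Longrightarrow> \<exists>w'\<in>W. w' \<circ> w = id \<and> w \<circ> w' = id"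
proof (induction rule: weyl_group.induct)
  case weyl_id
  show ?case using id_in_weyl by (metis comp_id)
next
  case (weyl_step w a)
  then obtain w' where w': "w' \<in> W" "w' \<circ> w = id" "w \<circ> w' = id" by blast
  have "refl_root a \<circ> refl_root a = id"
    using weyl_step root_nonzero by (auto simp: fun_eq_iff)
  then have "(w' \<circ> refl_root a) \<circ> (refl_root a \<circ> w) = id \<and> (refl_root a \<circ> w) \<circ> (w' \<circ> refl_root a) = id"
    using w' by (metis comp_assoc comp_id)
  then show ?case
    using comp_in_weyl[OF w'(1) refl_root_in_weyl[OF weyl_step(2)]] by blast
qed

lemma inv_weyl: assumes "w \<in> W" shows "inv w \<in> W" "inv w \<circ> w = id" "w \<circ> inv w = id"
proof -
  obtain w' where w': "w' \<in> W" "w' \<circ> w = id" "w \<circ> w' = id"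
    using weyl_inverse_exists[OF assms] by blast
  then have "inv w = w'" by (intro inv_unique_comp)
  then show "inv w \<in> W" "inv w \<circ> w = id" "w \<circ> inv w = id" using w' by auto
qed

lemma inv_weyl_apply [simp]: "w \<in> W \<Longrightarrow> inv w (w x) = x" "w \<in> W \<Longrightarrow> w (inv w x) = x"
  using inv_weyl[of w] by (auto simp: fun_eq_iff)

lemma finite_weyl: "finite W"
proof -
  have "inj_on (\<lambda>w. restrict w R) W"
  proof (rule inj_onI)
    fix w1 w2 assume w: "w1 \<in> W" "w2 \<in> W" and eq: "restrict w1 R = restrict w2 R"
    have "w1 x = w2 x" for x
      using linear_eq_on_span[OF linear_weyl[OF w(1)] linear_weyl[OF w(2)], of R x] eq span_roots
      by (metis UNIV_I restrict_apply')
    then show "w1 = w2" by auto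
  qed
  moreover have "(\<lambda>w. restrict w R) ` W \<subseteq> (\<Pi>\<^sub>E a\<in>R. R)"
    using weyl_root by auto
  moreover have "finite (\<Pi>\<^sub>E a\<in>R. R)"
    using finite_roots by (simp add: finite_PiE)
  ultimately show ?thesis using finite_imageD finite_subset by metis
qed

lemma bij_betw_inv_weyl: "bij_betw inv W W"
proof -
  have "inv (inv w) = w" if "w \<in> W" for w
    using inv_weyl[OF that] by (metis inv_unique_comp)
  then show ?thesis
    by (intro bij_betw_byWitness[where f'=inv]) (auto simp: inv_weyl)
qed

lemma bij_betw_weyl_mult_left: "w \<in> W \<Longrightarrow> bij_betw (\<lambda>u. w \<circ> u) W W"
  by (intro bij_betw_byWitness[where f'="\<lambda>u. inv w \<circ> u"])
     (auto simp: inv_weyl comp_in_weyl comp_assoc[symmetric])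

lemma bij_betw_weyl_mult_right: "w \<in> W \<Longrightarrow> bij_betw (\<lambda>u. u \<circ> w) W W"
  by (intro bij_betw_byWitness[where f'="\<lambda>u. u \<circ> inv w"])
     (auto simp: inv_weyl comp_in_weyl comp_assoc)

lemma det_weyl: "w \<in> W \<Longrightarrow> det (matrix w) = 1 \<or> det (matrix w) = -1"
proof (induction rule: weyl_group.induct)
  case weyl_id
  show ?case by (metis det_I matrix_id_mat_1)
next
  case (weyl_step w a)
  then have "det (matrix (refl_root a \<circ> w)) = - det (matrix w)"
    using det_matrix_comp[OF linear_refl_root linear_weyl[OF weyl_step(1)]]
      det_refl_root[OF root_nonzero[OF weyl_step(2)]] by simp
  then show ?case using weyl_step.IH unfolding o_def by auto
qed

lemma det_weyl_square: "w \<in> W \<Longrightarrow> det (matrix w) * det (matrix w) = 1"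
  using det_weyl by fastforce

lemma det_weyl_comp: "w \<in> W \<Longrightarrow> u \<in> W \<Longrightarrow> det (matrix (w \<circ> u)) = det (matrix w) * det (matrix u)"
  using det_matrix_comp linear_weyl by blast

lemma det_inv_weyl: "w \<in> W \<Longrightarrow> det (matrix (inv w)) = det (matrix w)"
  using det_weyl_comp[OF inv_weyl(1)] inv_weyl(2) det_weyl[of w]
  by (fastforce simp: matrix_id_mat_1)

lemma bij_betw_weyl_worbit: assumes w: "w \<in> W" shows "bij_betw w (worbit R l) (worbit R l)"
proof (rule bij_betw_byWitness[where f'="inv w"])
  show "w ` worbit R l \<subseteq> worbit R l" "inv w ` worbit R l \<subseteq> worbit R l"
    unfolding worbit_def using comp_in_weyl[OF w] comp_in_weyl[OF inv_weyl(1)[OF w]]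
    by (auto simp: image_iff) (metis comp_apply)+
qed (use w in auto)

lemma card_wstab_pos: "card (wstab R p) > 0"
proof -
  have "id \<in> wstab R p" "finite (wstab R p)"
    unfolding wstab_def using id_in_weyl finite_weyl by auto
  then show ?thesis using card_gt_0_iff by blast
qed

text \<open>Orbit--stabiliser: each point of the orbit is hit by a coset of the stabiliser.\<close>
lemma sum_weyl_apply_eq_orbit:
  "(\<Sum>u\<in>W. h (u p)) = real (card (wstab R p)) * (\<Sum>\<tau>\<in>worbit R p. h \<tau>)"
proof -
  have "(\<Sum>u\<in>W. h (u p)) = (\<Sum>\<tau>\<in>worbit R p. \<Sum>u\<in>{u\<in>W. u p = \<tau>}. h (u p))"
    unfolding worbit_def by (rule sum.image_gen[OF finite_weyl])
  also have "\<dots> = (\<Sum>\<tau>\<in>worbit R p. real (card (wstab R p)) * h \<tau>)"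
  proof (rule sum.cong[OF refl])
    fix \<tau> assume "\<tau> \<in> worbit R p"
    then obtain u0 where u0: "u0 \<in> W" "\<tau> = u0 p" unfolding worbit_def by auto
    have "bij_betw (\<lambda>u. u0 \<circ> u) (wstab R p) {u\<in>W. u p = \<tau>}"
      by (rule bij_betw_byWitness[where f'="\<lambda>u. inv u0 \<circ> u"])
         (use u0 in \<open>auto simp: wstab_def comp_in_weyl inv_weyl comp_assoc[symmetric]\<close>)
    then have "card {u\<in>W. u p = \<tau>} = card (wstab R p)"
      by (simp add: bij_betw_same_card)
    then show "(\<Sum>u\<in>{u\<in>W. u p = \<tau>}. h (u p)) = real (card (wstab R p)) * h \<tau>"
      by simp
  qed
  finally show ?thesis by (simp add: sum_distrib_left)
qed

definition alternant :: "real^'n \<Rightarrow> real^'n \<Rightarrow> real" where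
  "alternant \<mu> y = (\<Sum>w\<in>W. det (matrix w) * exp (w \<mu> \<bullet> y))"

lemma alternant_weyl:
  assumes u: "u \<in> W"
  shows "alternant (u \<mu>) y = det (matrix u) * alternant \<mu> y"
proof -
  have "alternant \<mu> y = (\<Sum>w\<in>W. det (matrix (w \<circ> u)) * exp ((w \<circ> u) \<mu> \<bullet> y))"
    unfolding alternant_def
    using sum.reindex_bij_betw[OF bij_betw_weyl_mult_right[OF u],
        of "\<lambda>w. det (matrix w) * exp (w \<mu> \<bullet> y)"]
    by simp
  also have "\<dots> = det (matrix u) * alternant (u \<mu>) y"
    unfolding alternant_def sum_distrib_left
    by (rule sum.cong) (use det_weyl_comp u in auto)
  finally show ?thesis using det_weyl_square[OF u] by (metis mult.assoc mult_1)
qed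

lemma alternant_singular:
  assumes "\<beta> \<in> R" and "\<mu> \<bullet> \<beta> = 0"
  shows "alternant \<mu> y = 0"
  using alternant_weyl[OF refl_root_in_weyl[OF assms(1)], of \<mu> y]
    refl_root_orthogonal[OF assms(2)] det_refl_root[OF root_nonzero[OF assms(1)]]
  by simp

lemma sum_weyl_det_exp_inner_apply:
  "(\<Sum>w\<in>W. det (matrix w) * exp (\<mu> \<bullet> w y)) = alternant \<mu> y"
proof -
  have "\<mu> \<bullet> w y = inv w \<mu> \<bullet> y" if "w \<in> W" for w
    using inner_weyl[OF that, of "inv w \<mu>" y] that by simp
  then have "(\<Sum>w\<in>W. det (matrix w) * exp (\<mu> \<bullet> w y))
      = (\<Sum>w\<in>W. det (matrix (inv w)) * exp (inv w \<mu> \<bullet> y))"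
    by (intro sum.cong) (auto simp: det_inv_weyl)
  also have "\<dots> = alternant \<mu> y"
    unfolding alternant_def
    using sum.reindex_bij_betw[OF bij_betw_inv_weyl, of "\<lambda>v. det (matrix v) * exp (v \<mu> \<bullet> y)"]
    by simp
  finally show ?thesis .
qed

end

section \<open>Positive and simple roots\<close>

locale positive_root_sys = root_sys R for R :: "(real^'n) set" +
  fixes Rp :: "(real^'n) set" and g :: "real^'n"
  assumes reduced: "reduced_rs R"
    and regular: "\<forall>a\<in>R. a \<bullet> g \<noteq> 0"
    and positive_roots_eq: "Rp = {a\<in>R. a \<bullet> g > 0}"
begin

abbreviation \<rho> where "\<rho> \<equiv> rho Rp"

lemma positive_subset_roots: "Rp \<subseteq> R"
  using positive_roots_eq by auto

lemma finite_positive: "finite Rp"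
  using finite_roots positive_subset_roots finite_subset by auto

lemma positive_inner_pos: "a \<in> Rp \<Longrightarrow> a \<bullet> g > 0"
  using positive_roots_eq by auto

lemma root_positive_or_negative: "a \<in> R \<Longrightarrow> a \<in> Rp \<or> - a \<in> Rp"
  using regular uminus_root positive_roots_eq by (cases "a \<bullet> g > 0") (auto simp: not_less order_le_less)

lemma positive_uminus_not_positive: "a \<in> Rp \<Longrightarrow> - a \<notin> Rp"
  using positive_roots_eq by auto

lemma parallel_root: "a \<in> R \<Longrightarrow> c *\<^sub>R a \<in> R \<Longrightarrow> c = 1 \<or> c = -1"
  using reduced by (simp add: reduced_rs_def)

lemma positive_induct [consumes 1, case_names less]:
  assumes "\<beta> \<in> Rp"
    and "\<And>\<beta>. \<beta> \<in> Rp \<Longrightarrow> (\<And>\<beta>'. \<beta>' \<in> Rp \<Longrightarrow> \<beta>' \<bullet> g < \<beta> \<bullet> g \<Longrightarrow> P \<beta>') \<Longrightarrow> P \<beta>"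
  shows "P \<beta>"
  using assms(1)
proof (induction \<beta> rule: measure_induct_rule[where f="\<lambda>\<beta>. card {\<gamma>\<in>Rp. \<gamma> \<bullet> g < \<beta> \<bullet> g}"])
  case (less \<beta>)
  show ?case
  proof (rule assms(2)[OF less.prems])
    fix \<beta>' assume \<beta>': "\<beta>' \<in> Rp" "\<beta>' \<bullet> g < \<beta> \<bullet> g"
    then have "{\<gamma>\<in>Rp. \<gamma> \<bullet> g < \<beta>' \<bullet> g} \<subset> {\<gamma>\<in>Rp. \<gamma> \<bullet> g < \<beta> \<bullet> g}"
      by auto
    then have "card {\<gamma>\<in>Rp. \<gamma> \<bullet> g < \<beta>' \<bullet> g} < card {\<gamma>\<in>Rp. \<gamma> \<bullet> g < \<beta> \<bullet> g}"
      using finite_positive by (intro psubset_card_mono) auto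
    then show "P \<beta>'" using less.IH \<beta>'(1) by blast
  qed
qed

definition simple_roots :: "(real^'n) set" where
  "simple_roots = {a\<in>Rp. \<not> (\<exists>b\<in>Rp. \<exists>c\<in>Rp. a = b + c)}"

lemma simple_roots_positive: "simple_roots \<subseteq> Rp"
  unfolding simple_roots_def by auto

lemma finite_simple_roots: "finite simple_roots"
  using finite_positive simple_roots_positive finite_subset by auto

lemma simple_root_in_roots: "\<alpha> \<in> simple_roots \<Longrightarrow> \<alpha> \<in> R"
  using simple_roots_positive positive_subset_roots by auto

lemma simple_root_nonzero: "\<alpha> \<in> simple_roots \<Longrightarrow> \<alpha> \<noteq> 0"
  using simple_root_in_roots root_nonzero by auto

lemma positive_nonneg_comb_simple:
  assumes "\<beta> \<in> Rp"
  shows "\<exists>c. (\<forall>a\<in>simple_roots. 0 \<le> c a) \<and> \<beta> = (\<Sum>a\<in>simple_roots. c a *\<^sub>R a)"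
  using assms
proof (induction \<beta> rule: positive_induct)
  case (less \<beta>)
  show ?case
  proof (cases "\<beta> \<in> simple_roots")
    case True
    then have "(\<Sum>a\<in>simple_roots. (if a = \<beta> then 1 else 0) *\<^sub>R a) = \<beta>"
      using finite_simple_roots by (simp add: if_distrib[of "\<lambda>c. c *\<^sub>R _"] cong: if_cong)
    then show ?thesis by (intro exI[of _ "\<lambda>a. if a = \<beta> then 1 else 0"]) auto
  next
    case False
    then obtain b1 b2 where b: "b1 \<in> Rp" "b2 \<in> Rp" "\<beta> = b1 + b2"
      using less.hyps unfolding simple_roots_def by auto
    obtain c1 where c1: "\<forall>a\<in>simple_roots. 0 \<le> c1 a" "b1 = (\<Sum>a\<in>simple_roots. c1 a *\<^sub>R a)"
      using less.IH[of b1] b positive_inner_pos[of b2] by (auto simp: inner_add_left)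
    obtain c2 where c2: "\<forall>a\<in>simple_roots. 0 \<le> c2 a" "b2 = (\<Sum>a\<in>simple_roots. c2 a *\<^sub>R a)"
      using less.IH[of b2] b positive_inner_pos[of b1] by (auto simp: inner_add_left)
    show ?thesis
      by (intro exI[of _ "\<lambda>a. c1 a + c2 a"])
         (use c1 c2 b in \<open>auto simp: scaleR_add_left sum.distrib\<close>)
  qed
qed

lemma inner_roots_sq_less:
  assumes a: "a \<in> R" and b: "b \<in> R" and "b \<noteq> a" and "b \<noteq> - a"
  shows "(a \<bullet> b)\<^sup>2 < (a \<bullet> a) * (b \<bullet> b)"
proof (rule ccontr)
  assume "\<not> ?thesis"
  then have ge: "(a \<bullet> b)\<^sup>2 \<ge> (a \<bullet> a) * (b \<bullet> b)" by simp
  have aa: "a \<bullet> a > 0" using root_nonzero[OF a] by simp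
  define k where "k = (a \<bullet> b) / (a \<bullet> a)"
  have "(b - k *\<^sub>R a) \<bullet> (b - k *\<^sub>R a) = b \<bullet> b - (a \<bullet> b)\<^sup>2 / (a \<bullet> a)"
    using aa unfolding k_def
    by (simp add: inner_diff_left inner_diff_right inner_commute power2_eq_square field_simps)
  also have "\<dots> \<le> 0" using ge aa by (simp add: field_simps)
  finally have "b = k *\<^sub>R a"
    by (metis eq_iff_diff_eq_0 inner_ge_zero inner_eq_zero_iff order_antisym)
  then have "k = 1 \<or> k = -1" using parallel_root[OF a] b by simp
  then show False using \<open>b = k *\<^sub>R a\<close> assms(3,4) by auto
qed

text \<open>The two Cartan integers of acute roots are positive with product below 4,
  so one of them is 1 and the corresponding reflection subtracts the other root.\<close>
lemma acute_roots_diff: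
  assumes a: "a \<in> R" and b: "b \<in> R" and ab: "a \<bullet> b > 0" and ne: "a \<noteq> b"
  shows "a - b \<in> R"
proof -
  have aa: "a \<bullet> a > 0" and bb: "b \<bullet> b > 0" using root_nonzero a b by auto
  have "b \<noteq> - a"
  proof
    assume "b = - a"
    then have "a \<bullet> b = - (a \<bullet> a)" by simp
    then show False using ab aa by simp
  qed
  then have lt: "(a \<bullet> b)\<^sup>2 < (a \<bullet> a) * (b \<bullet> b)" using inner_roots_sq_less a b ne by auto
  obtain i1 :: int where i1: "2 * (a \<bullet> b) / (b \<bullet> b) = of_int i1"
    using cartan_integer[OF b a] by (auto elim: Ints_cases)
  obtain i2 :: int where i2: "2 * (a \<bullet> b) / (a \<bullet> a) = of_int i2"
    using cartan_integer[OF a b] by (auto simp: inner_commute elim: Ints_cases)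
  have pos: "i1 > 0" "i2 > 0"
    using i1 i2 ab aa bb by (metis divide_pos_pos mult_pos_pos of_int_0_less_iff zero_less_numeral)+
  have "of_int (i1 * i2) = 4 * (a \<bullet> b)\<^sup>2 / ((a \<bullet> a) * (b \<bullet> b))"
    using aa bb by (simp add: field_simps power2_eq_square flip: i1 i2)
  also have "\<dots> < 4" using lt aa bb by (simp add: field_simps)
  finally have "i1 * i2 < 4" by linarith
  moreover have "i1 \<ge> 2 \<Longrightarrow> i2 \<ge> 2 \<Longrightarrow> i1 * i2 \<ge> 4"
    using mult_mono[of 2 i1 2 i2] by auto
  ultimately have "i1 = 1 \<or> i2 = 1" using pos by linarith
  then show ?thesis
  proof
    assume "i1 = 1"
    then have "refl_root b a = a - b" using i1 ab unfolding refl_root_def by (simp add: inner_commute)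
    then show ?thesis using refl_root_in_roots[OF b a] by simp
  next
    assume "i2 = 1"
    then have "refl_root a b = - (a - b)" using i2 ab unfolding refl_root_def by (simp add: inner_commute)
    then show ?thesis using refl_root_in_roots[OF a b] uminus_root by fastforce
  qed
qed

lemma simple_roots_obtuse:
  assumes a: "a \<in> simple_roots" and b: "b \<in> simple_roots" and ne: "a \<noteq> b"
  shows "a \<bullet> b \<le> 0"
proof (rule ccontr)
  assume "\<not> ?thesis"
  then have "a - b \<in> R"
    using acute_roots_diff simple_root_in_roots a b ne by auto
  then have "a - b \<in> Rp \<or> b - a \<in> Rp" using root_positive_or_negative by fastforce
  moreover have "a = (a - b) + b" "b = (b - a) + a" by simp_all
  ultimately show False
    using a b simple_roots_positive unfolding simple_roots_def by blast
qed

text \<open>Pairing with \<open>\<alpha>\<close> (obtuseness) and with \<open>g\<close> (positivity) excludes both signs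
  of the leftover coefficient.\<close>
lemma nonneg_comb_simple_eq_multiple:
  assumes \<alpha>: "\<alpha> \<in> simple_roots" and e: "\<forall>a\<in>simple_roots. 0 \<le> e a"
    and eq: "(\<Sum>a\<in>simple_roots. e a *\<^sub>R a) = k *\<^sub>R \<alpha>"
  shows "\<forall>a\<in>simple_roots - {\<alpha>}. e a = 0"
proof -
  let ?S = "simple_roots - {\<alpha>}"
  define v where "v = (\<Sum>a\<in>?S. e a *\<^sub>R a)"
  have v: "v = (k - e \<alpha>) *\<^sub>R \<alpha>"
    using eq sum.remove[OF finite_simple_roots \<alpha>, of "\<lambda>a. e a *\<^sub>R a"]
    unfolding v_def by (simp add: algebra_simps)
  have aa: "\<alpha> \<bullet> \<alpha> > 0" and ag: "\<alpha> \<bullet> g > 0"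
    using simple_root_nonzero \<alpha> positive_inner_pos simple_roots_positive by auto
  have terms_nonneg: "\<forall>a\<in>?S. 0 \<le> e a * (a \<bullet> g)"
  proof
    fix a assume "a \<in> ?S"
    then have "0 \<le> e a" "0 < a \<bullet> g"
      using e positive_inner_pos simple_roots_positive by auto
    then show "0 \<le> e a * (a \<bullet> g)" by simp
  qed
  have "v \<bullet> \<alpha> = (\<Sum>a\<in>?S. e a * (a \<bullet> \<alpha>))"
    unfolding v_def by (simp add: inner_sum_left)
  also have "\<dots> \<le> 0"
    using e simple_roots_obtuse \<alpha> by (intro sum_nonpos) (auto intro!: mult_nonneg_nonpos)
  finally have "(k - e \<alpha>) * (\<alpha> \<bullet> \<alpha>) \<le> 0" unfolding v by simp
  have "(\<Sum>a\<in>?S. e a * (a \<bullet> g)) = v \<bullet> g"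
    unfolding v_def by (simp add: inner_sum_left)
  also have "\<dots> = (k - e \<alpha>) * (\<alpha> \<bullet> g)"
    unfolding v by simp
  also have "\<dots> \<le> 0"
    using \<open>(k - e \<alpha>) * (\<alpha> \<bullet> \<alpha>) \<le> 0\<close> aa ag by (simp add: mult_le_0_iff)
  finally have "(\<Sum>a\<in>?S. e a * (a \<bullet> g)) = 0"
    using terms_nonneg by (meson order_antisym sum_nonneg)
  then have "\<forall>a\<in>?S. e a * (a \<bullet> g) = 0"
    using sum_nonneg_eq_0_iff[OF finite_Diff[OF finite_simple_roots], of "{\<alpha>}" "\<lambda>a. e a * (a \<bullet> g)"]
      terms_nonneg by auto
  then show ?thesis
    using positive_inner_pos simple_roots_positive by force
qed

lemma refl_simple_positive:
  assumes \<alpha>: "\<alpha> \<in> simple_roots" and \<beta>: "\<beta> \<in> Rp" and ne: "\<beta> \<noteq> \<alpha>"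
  shows "refl_root \<alpha> \<beta> \<in> Rp"
proof (rule ccontr)
  assume "refl_root \<alpha> \<beta> \<notin> Rp"
  moreover have "refl_root \<alpha> \<beta> \<in> R"
    using refl_root_in_roots simple_root_in_roots \<alpha> \<beta> positive_subset_roots by auto
  ultimately have neg: "- refl_root \<alpha> \<beta> \<in> Rp" using root_positive_or_negative by auto
  obtain c where c: "\<forall>a\<in>simple_roots. 0 \<le> c a" "\<beta> = (\<Sum>a\<in>simple_roots. c a *\<^sub>R a)"
    using positive_nonneg_comb_simple[OF \<beta>] by auto
  obtain d where d: "\<forall>a\<in>simple_roots. 0 \<le> d a" "- refl_root \<alpha> \<beta> = (\<Sum>a\<in>simple_roots. d a *\<^sub>R a)"
    using positive_nonneg_comb_simple[OF neg] by auto
  have "(\<Sum>a\<in>simple_roots. (c a + d a) *\<^sub>R a) = \<beta> - refl_root \<alpha> \<beta>"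
    by (simp add: scaleR_add_left sum.distrib flip: c(2) d(2))
  also have "\<dots> = (2 * (\<beta> \<bullet> \<alpha>) / (\<alpha> \<bullet> \<alpha>)) *\<^sub>R \<alpha>"
    unfolding refl_root_def by simp
  finally have "(\<Sum>a\<in>simple_roots. (c a + d a) *\<^sub>R a) = (2 * (\<beta> \<bullet> \<alpha>) / (\<alpha> \<bullet> \<alpha>)) *\<^sub>R \<alpha>" .
  moreover have "\<forall>a\<in>simple_roots. 0 \<le> c a + d a"
    using c(1) d(1) by simp
  ultimately have "\<forall>a\<in>simple_roots - {\<alpha>}. c a + d a = 0"
    using nonneg_comb_simple_eq_multiple[OF \<alpha>, of "\<lambda>a. c a + d a"] by blast
  then have "\<forall>a\<in>simple_roots - {\<alpha>}. c a = 0"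
    using c(1) d(1) by (metis DiffD1 add_nonneg_eq_0_iff)
  then have "\<beta> = c \<alpha> *\<^sub>R \<alpha>"
    using c(2) sum.remove[OF finite_simple_roots \<alpha>, of "\<lambda>a. c a *\<^sub>R a"] by simp
  then have "c \<alpha> = 1 \<or> c \<alpha> = -1"
    using parallel_root simple_root_in_roots[OF \<alpha>] \<beta> positive_subset_roots by auto
  then show False
    using \<open>\<beta> = c \<alpha> *\<^sub>R \<alpha>\<close> ne \<beta> positive_uminus_not_positive \<alpha> simple_roots_positive by auto
qed

lemma bij_betw_refl_simple:
  assumes \<alpha>: "\<alpha> \<in> simple_roots"
  shows "bij_betw (refl_root \<alpha>) (Rp - {\<alpha>}) (Rp - {\<alpha>})"
proof -
  have nz: "\<alpha> \<noteq> 0" using simple_root_nonzero \<alpha> by auto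
  have "refl_root \<alpha> \<beta> \<in> Rp - {\<alpha>}" if "\<beta> \<in> Rp - {\<alpha>}" for \<beta>
  proof -
    have "refl_root \<alpha> \<beta> \<noteq> \<alpha>"
      using that positive_uminus_not_positive \<alpha> simple_roots_positive
        refl_root_refl_root[OF nz, of \<beta>] refl_root_self[OF nz] by force
    then show ?thesis using refl_simple_positive \<alpha> that by auto
  qed
  then show ?thesis
    by (intro bij_betw_byWitness[where f'="refl_root \<alpha>"]) (use nz in auto)
qed

lemma refl_simple_sum_positive:
  assumes \<alpha>: "\<alpha> \<in> simple_roots"
  shows "refl_root \<alpha> (\<Sum>Rp) = (\<Sum>Rp) - 2 *\<^sub>R \<alpha>"
proof -
  have nz: "\<alpha> \<noteq> 0" and \<alpha>p: "\<alpha> \<in> Rp" using simple_root_nonzero simple_roots_positive \<alpha> by auto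
  have "refl_root \<alpha> (\<Sum>Rp) = (\<Sum>a\<in>Rp. refl_root \<alpha> a)"
    using linear_sum[OF linear_refl_root] by (simp add: o_def)
  also have "\<dots> = refl_root \<alpha> \<alpha> + (\<Sum>a\<in>Rp - {\<alpha>}. refl_root \<alpha> a)"
    by (rule sum.remove[OF finite_positive \<alpha>p])
  also have "(\<Sum>a\<in>Rp - {\<alpha>}. refl_root \<alpha> a) = (\<Sum>a\<in>Rp - {\<alpha>}. a)"
    using sum.reindex_bij_betw[OF bij_betw_refl_simple[OF \<alpha>], of "\<lambda>a. a"] by simp
  also have "\<dots> = (\<Sum>Rp) - \<alpha>"
    using sum.remove[OF finite_positive \<alpha>p, of "\<lambda>a. a"] by simp
  finally show ?thesis using refl_root_self[OF nz] by (simp add: scaleR_2)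
qed

lemma refl_simple_rho:
  assumes "\<alpha> \<in> simple_roots"
  shows "refl_root \<alpha> \<rho> = \<rho> - \<alpha>"
proof -
  have "refl_root \<alpha> ((1/2) *\<^sub>R (\<Sum>Rp)) = (1/2) *\<^sub>R refl_root \<alpha> (\<Sum>Rp)"
    by (rule linear_scale[OF linear_refl_root])
  then show ?thesis
    unfolding rho_def using refl_simple_sum_positive[OF assms] by (simp add: scaleR_diff_right)
qed

lemma rho_simple_coroot:
  assumes \<alpha>: "\<alpha> \<in> simple_roots"
  shows "2 * (\<rho> \<bullet> \<alpha>) / (\<alpha> \<bullet> \<alpha>) = 1"
proof -
  have "(2 * (\<rho> \<bullet> \<alpha>) / (\<alpha> \<bullet> \<alpha>)) *\<^sub>R \<alpha> = 1 *\<^sub>R \<alpha>"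
    using refl_simple_rho[OF \<alpha>] unfolding refl_root_def by simp
  then show ?thesis using simple_root_nonzero[OF \<alpha>] by (metis scaleR_cancel_right)
qed

lemma inner_rho_simple_pos:
  assumes \<alpha>: "\<alpha> \<in> simple_roots"
  shows "\<rho> \<bullet> \<alpha> > 0"
proof -
  have "\<alpha> \<bullet> \<alpha> > 0" using simple_root_nonzero[OF \<alpha>] by simp
  moreover have "\<rho> \<bullet> \<alpha> = (\<alpha> \<bullet> \<alpha>) / 2"
    using rho_simple_coroot[OF \<alpha>] calculation by (simp add: field_simps)
  ultimately show ?thesis by linarith
qed

lemma inner_rho_positive:
  assumes \<beta>: "\<beta> \<in> Rp"
  shows "\<rho> \<bullet> \<beta> > 0"
proof -
  obtain c where c: "\<forall>a\<in>simple_roots. 0 \<le> c a" "\<beta> = (\<Sum>a\<in>simple_roots. c a *\<^sub>R a)"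
    using positive_nonneg_comb_simple[OF \<beta>] by auto
  have "\<beta> \<noteq> 0" using \<beta> positive_subset_roots root_nonzero by auto
  then obtain a0 where a0: "a0 \<in> simple_roots" "c a0 > 0"
    using c by (metis (no_types, lifting) order_le_less scaleR_eq_0_iff sum.neutral)
  have "\<rho> \<bullet> \<beta> = (\<Sum>a\<in>simple_roots. c a * (\<rho> \<bullet> a))"
    using c by (simp add: inner_sum_right)
  also have "\<dots> > 0"
    using a0 c(1) inner_rho_simple_pos
    by (intro sum_pos2[OF finite_simple_roots a0(1)]) (auto intro: mult_nonneg_nonneg less_imp_le)
  finally show ?thesis .
qed

lemma positive_acute_simple:
  assumes \<beta>: "\<beta> \<in> Rp"
  shows "\<exists>\<alpha>\<in>simple_roots. \<beta> \<bullet> \<alpha> > 0"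
proof (rule ccontr)
  assume "\<not> ?thesis"
  then have le: "\<forall>\<alpha>\<in>simple_roots. \<beta> \<bullet> \<alpha> \<le> 0" by auto
  obtain c where c: "\<forall>a\<in>simple_roots. 0 \<le> c a" "\<beta> = (\<Sum>a\<in>simple_roots. c a *\<^sub>R a)"
    using positive_nonneg_comb_simple[OF \<beta>] by auto
  have "\<beta> \<bullet> \<beta> = (\<Sum>a\<in>simple_roots. c a * (\<beta> \<bullet> a))"
    by (subst (2) c(2)) (simp add: inner_sum_right)
  also have "\<dots> \<le> 0" using c le by (intro sum_nonpos) (simp add: mult_nonneg_nonpos)
  finally have "\<beta> = 0" by (metis inner_ge_zero inner_eq_zero_iff order_antisym)
  then show False using \<beta> positive_subset_roots root_nonzero by auto
qed

lemma refl_word_simple_in_weyl: "set xs \<subseteq> simple_roots \<Longrightarrow> refl_word xs \<in> W"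
  using refl_word_in_weyl simple_root_in_roots by blast

lemma positive_simple_conjugate:
  assumes "\<beta> \<in> Rp"
  shows "\<exists>xs \<alpha>. set xs \<subseteq> simple_roots \<and> \<alpha> \<in> simple_roots \<and> refl_word xs \<alpha> = \<beta>"
  using assms
proof (induction \<beta> rule: positive_induct)
  case (less \<beta>)
  show ?case
  proof (cases "\<beta> \<in> simple_roots")
    case True
    then show ?thesis by (intro exI[of _ "[]"] exI[of _ \<beta>]) auto
  next
    case False
    obtain \<alpha> where \<alpha>: "\<alpha> \<in> simple_roots" "\<beta> \<bullet> \<alpha> > 0"
      using positive_acute_simple[OF less.hyps] by auto
    have aa: "\<alpha> \<bullet> \<alpha> > 0" and ag: "\<alpha> \<bullet> g > 0"
      using \<alpha>(1) simple_root_nonzero positive_inner_pos simple_roots_positive by auto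
    have "\<beta> \<noteq> \<alpha>" using \<alpha> False by auto
    then have \<gamma>: "refl_root \<alpha> \<beta> \<in> Rp" using refl_simple_positive \<alpha> less.hyps by auto
    have "refl_root \<alpha> \<beta> \<bullet> g = \<beta> \<bullet> g - (2 * (\<beta> \<bullet> \<alpha>) / (\<alpha> \<bullet> \<alpha>)) * (\<alpha> \<bullet> g)"
      unfolding refl_root_def by (simp add: inner_diff_left)
    also have "\<dots> < \<beta> \<bullet> g"
      using \<alpha>(2) aa ag by simp
    finally obtain xs \<alpha>' where xs: "set xs \<subseteq> simple_roots" "\<alpha>' \<in> simple_roots"
        "refl_word xs \<alpha>' = refl_root \<alpha> \<beta>"
      using less.IH \<gamma> by blast
    then have "refl_word (\<alpha> # xs) \<alpha>' = \<beta>"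
      using simple_root_nonzero[OF \<alpha>(1)] by simp
    then show ?thesis using xs \<alpha> by (intro exI[of _ "\<alpha> # xs"] exI[of _ \<alpha>']) auto
  qed
qed

text \<open>Every positive root is \<open>u \<alpha>\<close> with \<open>\<alpha>\<close> simple, and then its reflection is
  \<open>u s\<^sub>\<alpha> u\<inverse>\<close>; negative roots give the same reflections.\<close>
lemma refl_root_eq_refl_word:
  assumes \<beta>: "\<beta> \<in> R"
  shows "\<exists>xs. set xs \<subseteq> simple_roots \<and> refl_root \<beta> = refl_word xs"
proof -
  have "\<exists>xs. set xs \<subseteq> simple_roots \<and> refl_root \<beta>' = refl_word xs" if \<beta>': "\<beta>' \<in> Rp" for \<beta>'
  proof -
    obtain ys \<alpha> where ys: "set ys \<subseteq> simple_roots" "\<alpha> \<in> simple_roots" "refl_word ys \<alpha> = \<beta>'"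
      using positive_simple_conjugate[OF \<beta>'] by auto
    have nz: "0 \<notin> set (rev ys)" using ys(1) simple_root_nonzero by auto
    have "refl_word (ys @ [\<alpha>] @ rev ys) x = refl_root \<beta>' x" for x
    proof -
      have "refl_word (ys @ [\<alpha>] @ rev ys) x = refl_word ys (refl_root \<alpha> (refl_word (rev ys) x))"
        by (simp add: refl_word_append)
      also have "\<dots> = refl_root \<beta>' (refl_word ys (refl_word (rev ys) x))"
        using weyl_refl_root_conj[OF refl_word_simple_in_weyl[OF ys(1)]] ys(3) by simp
      also have "\<dots> = refl_root \<beta>' x"
        using refl_word_rev[OF nz, of x] by simp
      finally show ?thesis .
    qed
    then show ?thesis using ys by (intro exI[of _ "ys @ [\<alpha>] @ rev ys"]) auto
  qed
  then show ?thesis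
    using root_positive_or_negative[OF \<beta>] refl_root_uminus[of \<beta>] by (metis minus_minus)
qed

lemma weyl_eq_refl_word: "w \<in> W \<Longrightarrow> \<exists>xs. set xs \<subseteq> simple_roots \<and> w = refl_word xs"
proof (induction rule: weyl_group.induct)
  case weyl_id
  show ?case by (intro exI[of _ "[]"]) auto
next
  case (weyl_step w a)
  then obtain xs ys where "set xs \<subseteq> simple_roots" "w = refl_word xs"
      "set ys \<subseteq> simple_roots" "refl_root a = refl_word ys"
    using refl_root_eq_refl_word by metis
  then show ?case by (intro exI[of _ "ys @ xs"]) (auto simp: refl_word_append)
qed

lemma refl_word_sign_change:
  "\<beta> \<in> Rp \<Longrightarrow> refl_word ys \<beta> \<notin> Rp \<Longrightarrow>
    \<exists>us b vs. ys = us @ b # vs \<and> refl_word vs \<beta> \<in> Rp \<and> refl_root b (refl_word vs \<beta>) \<notin> Rp"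
proof (induction ys)
  case Nil
  then show ?case by simp
next
  case (Cons a ys)
  show ?case
  proof (cases "refl_word ys \<beta> \<in> Rp")
    case True
    then show ?thesis using Cons by (intro exI[of _ "[]"] exI[of _ a] exI[of _ ys]) auto
  next
    case False
    then obtain us b vs where "ys = us @ b # vs" "refl_word vs \<beta> \<in> Rp" "refl_root b (refl_word vs \<beta>) \<notin> Rp"
      using Cons by blast
    then show ?thesis by (intro exI[of _ "a # us"] exI[of _ b] exI[of _ vs]) auto
  qed
qed

text \<open>Exchange condition: at the first step where the image of \<open>\<alpha>\<close> turns negative it
  must equal the simple root \<open>b\<close> reflected there, and then \<open>s\<^sub>b v s\<^sub>\<alpha> = v\<close>
  cancels two letters.\<close>
lemma refl_word_exchange:
  assumes ys: "set ys \<subseteq> simple_roots" and \<alpha>: "\<alpha> \<in> simple_roots"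
    and neg: "refl_word ys \<alpha> \<notin> Rp"
  shows "\<exists>zs. set zs \<subseteq> simple_roots \<and> length zs < length (ys @ [\<alpha>])
    \<and> refl_word zs = refl_word (ys @ [\<alpha>])"
proof -
  obtain us b vs where uv: "ys = us @ b # vs" "refl_word vs \<alpha> \<in> Rp" "refl_root b (refl_word vs \<alpha>) \<notin> Rp"
    using refl_word_sign_change[OF _ neg] \<alpha> simple_roots_positive by blast
  have b: "b \<in> simple_roots" and vs: "set vs \<subseteq> simple_roots" and us: "set us \<subseteq> simple_roots"
    using uv(1) ys by auto
  have b_eq: "refl_word vs \<alpha> = b"
    using refl_simple_positive[OF b uv(2)] uv(3) by auto
  have "refl_word (b # vs @ [\<alpha>]) x = refl_word vs x" for x
  proof -
    have "refl_word (b # vs @ [\<alpha>]) x = refl_root b (refl_word vs (refl_root \<alpha> x))"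
      by (simp add: refl_word_append)
    also have "\<dots> = refl_root b (refl_root b (refl_word vs x))"
      using weyl_refl_root_conj[OF refl_word_simple_in_weyl[OF vs]] b_eq by simp
    also have "\<dots> = refl_word vs x"
      using simple_root_nonzero[OF b] by simp
    finally show ?thesis .
  qed
  then have "refl_word (us @ vs) = refl_word (ys @ [\<alpha>])"
    using uv(1) by (auto simp: refl_word_append fun_eq_iff)
  then show ?thesis
    using us vs uv(1) by (intro exI[of _ "us @ vs"]) auto
qed

lemma refl_word_positive_eq_id:
  assumes "set xs \<subseteq> simple_roots" and "\<forall>\<beta>\<in>Rp. refl_word xs \<beta> \<in> Rp"
  shows "refl_word xs = id"
  using assms
proof (induction xs rule: length_induct)
  case (1 xs)
  show ?case
  proof (cases xs rule: rev_exhaust)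
    case Nil
    then show ?thesis by simp
  next
    case (snoc ys \<alpha>)
    have ys: "set ys \<subseteq> simple_roots" and \<alpha>: "\<alpha> \<in> simple_roots"
      using "1.prems"(1) snoc by auto
    have "refl_word xs \<alpha> = - refl_word ys \<alpha>"
      using snoc refl_root_self[OF simple_root_nonzero[OF \<alpha>]]
        linear_neg[OF linear_weyl[OF refl_word_simple_in_weyl[OF ys]]]
      by (simp add: refl_word_append)
    then have "refl_word ys \<alpha> \<notin> Rp"
      using "1.prems"(2) \<alpha> simple_roots_positive positive_uminus_not_positive by force
    then obtain zs where "set zs \<subseteq> simple_roots" "length zs < length xs" "refl_word zs = refl_word xs"
      using refl_word_exchange[OF ys \<alpha>] snoc by blast
    then show ?thesis using "1.IH" "1.prems"(2) by metis
  qed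
qed

lemma weyl_positive_eq_id:
  assumes "w \<in> W" and "\<forall>\<beta>\<in>Rp. w \<beta> \<in> Rp"
  shows "w = id"
  using weyl_eq_refl_word[OF assms(1)] refl_word_positive_eq_id assms(2) by blast

lemma weyl_fix_rho_eq_id:
  assumes w: "w \<in> W" and fixed: "w \<rho> = \<rho>"
  shows "w = id"
proof (rule weyl_positive_eq_id[OF w], intro ballI)
  fix \<beta> assume \<beta>: "\<beta> \<in> Rp"
  have "\<rho> \<bullet> w \<beta> = \<rho> \<bullet> \<beta>"
    using inner_weyl[OF w, of \<rho> \<beta>] fixed by simp
  then have "\<rho> \<bullet> w \<beta> > 0" using inner_rho_positive[OF \<beta>] by simp
  moreover have "w \<beta> \<in> R" using weyl_root w \<beta> positive_subset_roots by auto
  ultimately show "w \<beta> \<in> Rp"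
    using root_positive_or_negative inner_rho_positive by fastforce
qed

end

section \<open>The Weyl denominator formula\<close>

lemma tendsto_exp_mult_neg_at_top: "(c::real) < 0 \<Longrightarrow> ((\<lambda>s. exp (s * c)) \<longlongrightarrow> 0) at_top"
  by real_asymp

context positive_root_sys
begin

abbreviation \<delta> where "\<delta> \<equiv> weyl_delta Rp"

lemma weyl_delta_refl_simple:
  assumes \<alpha>: "\<alpha> \<in> simple_roots"
  shows "\<delta> (refl_root \<alpha> y) = - \<delta> y"
proof -
  let ?f = "\<lambda>x::real. exp (x / 2) - exp (- x / 2)"
  have nz: "\<alpha> \<noteq> 0" and \<alpha>p: "\<alpha> \<in> Rp" using simple_root_nonzero simple_roots_positive \<alpha> by auto
  have \<delta>_eq: "\<delta> z = (\<Prod>a\<in>Rp. ?f (a \<bullet> z))" for z unfolding weyl_delta_def by simp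
  have "\<delta> (refl_root \<alpha> y) = (\<Prod>a\<in>Rp. ?f (refl_root \<alpha> a \<bullet> y))"
    unfolding \<delta>_eq by (simp only: inner_refl_root_right[OF nz])
  also have "\<dots> = ?f (refl_root \<alpha> \<alpha> \<bullet> y) * (\<Prod>a\<in>Rp - {\<alpha>}. ?f (refl_root \<alpha> a \<bullet> y))"
    by (rule prod.remove[OF finite_positive \<alpha>p])
  also have "(\<Prod>a\<in>Rp - {\<alpha>}. ?f (refl_root \<alpha> a \<bullet> y)) = (\<Prod>a\<in>Rp - {\<alpha>}. ?f (a \<bullet> y))"
    using prod.reindex_bij_betw[OF bij_betw_refl_simple[OF \<alpha>], of "\<lambda>a. ?f (a \<bullet> y)"] by simp
  also have "?f (refl_root \<alpha> \<alpha> \<bullet> y) = - ?f (\<alpha> \<bullet> y)"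
    using refl_root_self[OF nz] by simp
  also have "- ?f (\<alpha> \<bullet> y) * (\<Prod>a\<in>Rp - {\<alpha>}. ?f (a \<bullet> y)) = - \<delta> y"
    unfolding \<delta>_eq prod.remove[OF finite_positive \<alpha>p, of "\<lambda>a. ?f (a \<bullet> y)"] by (simp add: algebra_simps)
  finally show ?thesis .
qed

lemma weyl_delta_weyl:
  assumes w: "w \<in> W"
  shows "\<delta> (w y) = det (matrix w) * \<delta> y"
proof -
  have "\<delta> (refl_word xs y) = det (matrix (refl_word xs)) * \<delta> y" if "set xs \<subseteq> simple_roots" for xs
    using that
  proof (induction xs)
    case Nil
    then show ?case by (simp add: matrix_id_mat_1[unfolded id_def])
  next
    case (Cons a xs)
    then have a: "a \<in> simple_roots" and xs: "set xs \<subseteq> simple_roots" by auto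
    have "det (matrix (refl_word (a # xs))) = - det (matrix (refl_word xs))"
      using det_matrix_comp[OF linear_refl_root linear_weyl[OF refl_word_simple_in_weyl[OF xs]]]
        det_refl_root[OF simple_root_nonzero[OF a]] by simp
    then show ?case using Cons.IH[OF xs] weyl_delta_refl_simple[OF a] by (simp add: o_def)
  qed
  then show ?thesis using weyl_eq_refl_word[OF w] by auto
qed

lemma weyl_delta_expand:
  "\<delta> y = (\<Sum>S\<in>Pow Rp. (-1) ^ card S * exp ((\<rho> - \<Sum>S) \<bullet> y))"
proof -
  have "\<delta> y = (\<Prod>a\<in>Rp. (- exp (- (a \<bullet> y) / 2)) + exp ((a \<bullet> y) / 2))"
    unfolding weyl_delta_def by simp
  also have "\<dots> = (\<Sum>S\<in>Pow Rp. (\<Prod>a\<in>S. - exp (- (a \<bullet> y) / 2)) * (\<Prod>a\<in>Rp - S. exp ((a \<bullet> y) / 2)))"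
    by (rule prod_add[OF finite_positive])
  also have "\<dots> = (\<Sum>S\<in>Pow Rp. (-1) ^ card S * exp ((\<rho> - \<Sum>S) \<bullet> y))"
  proof (rule sum.cong[OF refl])
    fix S assume S: "S \<in> Pow Rp"
    have fin: "finite S" using S finite_positive finite_subset by auto
    have "(\<Sum>Rp) = (\<Sum>(Rp - S)) + (\<Sum>S)"
      using sum.subset_diff[of S Rp "\<lambda>a. a"] S finite_positive by auto
    then have "(\<rho> - \<Sum>S) \<bullet> y = (\<Sum>a\<in>S. - (a \<bullet> y) / 2) + (\<Sum>a\<in>Rp - S. (a \<bullet> y) / 2)"
      unfolding rho_def
      by (simp add: inner_diff_left inner_add_left inner_sum_left sum_divide_distrib[symmetric]
          sum_negf algebra_simps)
    then show "(\<Prod>a\<in>S. - exp (- (a \<bullet> y) / 2)) * (\<Prod>a\<in>Rp - S. exp ((a \<bullet> y) / 2)) =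
        (-1) ^ card S * exp ((\<rho> - \<Sum>S) \<bullet> y)"
      using fin finite_positive by (simp add: prod_uminus exp_sum exp_add)
  qed
  finally show ?thesis .
qed

text \<open>Antisymmetrising the expansion of \<open>\<delta>\<close> over \<open>W\<close>, using that \<open>\<delta>\<close> itself is
  alternating.\<close>
lemma card_weyl_mult_weyl_delta:
  "real (card W) * \<delta> y = (\<Sum>S\<in>Pow Rp. (-1) ^ card S * alternant (\<rho> - \<Sum>S) y)"
proof -
  have "real (card W) * \<delta> y = (\<Sum>w\<in>W. det (matrix w) * \<delta> (w y))"
    using weyl_delta_weyl det_weyl_square by (simp add: mult.assoc[symmetric])
  also have "\<dots> = (\<Sum>w\<in>W. \<Sum>S\<in>Pow Rp. (-1) ^ card S * (det (matrix w) * exp ((\<rho> - \<Sum>S) \<bullet> w y)))"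
    unfolding weyl_delta_expand sum_distrib_left by (simp add: algebra_simps)
  also have "\<dots> = (\<Sum>S\<in>Pow Rp. (-1) ^ card S * (\<Sum>w\<in>W. det (matrix w) * exp ((\<rho> - \<Sum>S) \<bullet> w y)))"
    by (subst sum.swap) (simp add: sum_distrib_left)
  also have "\<dots> = (\<Sum>S\<in>Pow Rp. (-1) ^ card S * alternant (\<rho> - \<Sum>S) y)"
    by (simp add: sum_weyl_det_exp_inner_apply)
  finally show ?thesis .
qed

lemma refl_simple_rho_minus_sum:
  assumes \<alpha>: "\<alpha> \<in> simple_roots" and S: "S \<subseteq> Rp"
  shows "\<exists>S'\<subseteq>Rp. refl_root \<alpha> (\<rho> - \<Sum>S) = \<rho> - \<Sum>S'"
proof -
  have nz: "\<alpha> \<noteq> 0" and \<alpha>p: "\<alpha> \<in> Rp" using simple_root_nonzero simple_roots_positive \<alpha> by auto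
  have inj: "inj_on (refl_root \<alpha>) X" for X by (metis inj_onI refl_root_refl_root[OF nz])
  have fin: "finite S" using S finite_positive finite_subset by auto
  have lin: "refl_root \<alpha> (\<rho> - \<Sum>S) = \<rho> - \<alpha> - (\<Sum>b\<in>S. refl_root \<alpha> b)"
    by (simp add: refl_simple_rho[OF \<alpha>] linear_diff[OF linear_refl_root] linear_sum[OF linear_refl_root])
  show ?thesis
  proof (cases "\<alpha> \<in> S")
    case True
    have "(\<Sum>b\<in>S. refl_root \<alpha> b) = - \<alpha> + \<Sum>(refl_root \<alpha> ` (S - {\<alpha>}))"
      using sum.remove[OF fin True, of "refl_root \<alpha>"] sum.reindex[OF inj, of "\<lambda>x. x"]
        refl_root_self[OF nz] by simp
    moreover have "refl_root \<alpha> ` (S - {\<alpha>}) \<subseteq> Rp"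
      using bij_betw_refl_simple[OF \<alpha>] S unfolding bij_betw_def by auto
    ultimately show ?thesis using lin by (intro exI[of _ "refl_root \<alpha> ` (S - {\<alpha>})"]) auto
  next
    case False
    have img: "refl_root \<alpha> ` S \<subseteq> Rp - {\<alpha>}"
      using bij_betw_refl_simple[OF \<alpha>] S False unfolding bij_betw_def by auto
    then have "\<Sum>(insert \<alpha> (refl_root \<alpha> ` S)) = \<alpha> + (\<Sum>b\<in>S. refl_root \<alpha> b)"
      using fin sum.reindex[OF inj, of "\<lambda>x. x"] by (subst sum.insert) auto
    moreover have "insert \<alpha> (refl_root \<alpha> ` S) \<subseteq> Rp" using img \<alpha>p by auto
    ultimately show ?thesis using lin by (intro exI[of _ "insert \<alpha> (refl_root \<alpha> ` S)"]) (auto simp: algebra_simps)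
  qed
qed

lemma weyl_rho_minus_sum:
  assumes u: "u \<in> W" and S: "S \<subseteq> Rp"
  shows "\<exists>S'\<subseteq>Rp. u (\<rho> - \<Sum>S) = \<rho> - \<Sum>S'"
proof -
  have "\<exists>S'\<subseteq>Rp. refl_word xs (\<rho> - \<Sum>S) = \<rho> - \<Sum>S'" if "set xs \<subseteq> simple_roots" for xs
    using that
  proof (induction xs)
    case Nil
    then show ?case using S by auto
  next
    case (Cons a xs)
    then obtain S1 where "S1 \<subseteq> Rp" "refl_word xs (\<rho> - \<Sum>S) = \<rho> - \<Sum>S1" by auto
    then show ?case using refl_simple_rho_minus_sum[of a S1] Cons.prems by auto
  qed
  then show ?thesis using weyl_eq_refl_word[OF u] by auto
qed

text \<open>If \<open>\<rho> - \<Sum>S\<close> is strictly dominant, its coroot coordinates are integers of the form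
  \<open>1 - k\<close> that are positive, so \<open>\<Sum>S\<close> pairs nonpositively with every simple root and hence
  with itself.\<close>
lemma rho_minus_sum_dominant:
  assumes S: "S \<subseteq> Rp" and dom: "\<forall>\<alpha>\<in>simple_roots. (\<rho> - \<Sum>S) \<bullet> \<alpha> > 0"
  shows "\<Sum>S = 0"
proof -
  let ?s = "\<Sum>S"
  have nonpos: "?s \<bullet> \<alpha> \<le> 0" if \<alpha>: "\<alpha> \<in> simple_roots" for \<alpha>
  proof -
    have aa: "\<alpha> \<bullet> \<alpha> > 0" using simple_root_nonzero[OF \<alpha>] by simp
    have "2 * (?s \<bullet> \<alpha>) / (\<alpha> \<bullet> \<alpha>) = (\<Sum>b\<in>S. 2 * (b \<bullet> \<alpha>) / (\<alpha> \<bullet> \<alpha>))"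
      by (simp add: inner_sum_left sum_distrib_left sum_divide_distrib)
    also have "\<dots> \<in> \<int>"
      using cartan_integer simple_root_in_roots[OF \<alpha>] S positive_subset_roots by (intro Ints_sum) auto
    finally obtain i :: int where i: "2 * (?s \<bullet> \<alpha>) / (\<alpha> \<bullet> \<alpha>) = of_int i"
      by (auto elim: Ints_cases)
    have "2 * ((\<rho> - ?s) \<bullet> \<alpha>) / (\<alpha> \<bullet> \<alpha>) = 1 - of_int i"
      using rho_simple_coroot[OF \<alpha>] aa i
      by (simp add: inner_diff_left diff_divide_distrib right_diff_distrib)
    moreover have "2 * ((\<rho> - ?s) \<bullet> \<alpha>) / (\<alpha> \<bullet> \<alpha>) > 0" using dom \<alpha> aa by simp
    ultimately have "i \<le> 0" by simp
    then have "2 * (?s \<bullet> \<alpha>) / (\<alpha> \<bullet> \<alpha>) \<le> 0" using i by simp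
    then show ?thesis using aa by (simp add: divide_le_0_iff)
  qed
  have "?s \<bullet> b \<le> 0" if b: "b \<in> S" for b
  proof -
    obtain c where c: "\<forall>a\<in>simple_roots. 0 \<le> c a" "b = (\<Sum>a\<in>simple_roots. c a *\<^sub>R a)"
      using positive_nonneg_comb_simple b S by blast
    have "?s \<bullet> b = (\<Sum>a\<in>simple_roots. c a * (?s \<bullet> a))"
      by (subst c(2)) (simp add: inner_sum_right)
    also have "\<dots> \<le> 0" using c nonpos by (intro sum_nonpos) (simp add: mult_nonneg_nonpos)
    finally show ?thesis .
  qed
  then have "?s \<bullet> ?s \<le> 0" by (simp add: inner_sum_right sum_nonpos)
  then show ?thesis by (metis inner_ge_zero inner_eq_zero_iff order_antisym)
qed

text \<open>Choose \<open>u\<close> maximising \<open>u \<mu> \<bullet> \<rho>\<close>; comparing with \<open>s\<^sub>\<alpha> u\<close> shows that \<open>u \<mu>\<close> is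
  dominant, and regularity makes it strictly dominant.\<close>
lemma rho_minus_sum_conj_rho:
  assumes S: "S \<subseteq> Rp" and reg: "\<forall>\<beta>\<in>R. (\<rho> - \<Sum>S) \<bullet> \<beta> \<noteq> 0"
  shows "\<exists>u\<in>W. u (\<rho> - \<Sum>S) = \<rho>"
proof -
  let ?\<mu> = "\<rho> - \<Sum>S"
  obtain u where u: "u \<in> W" and max: "\<And>v. v \<in> W \<Longrightarrow> v ?\<mu> \<bullet> \<rho> \<le> u ?\<mu> \<bullet> \<rho>"
  proof -
    let ?F = "(\<lambda>v. v ?\<mu> \<bullet> \<rho>) ` W"
    have "Max ?F \<in> ?F" using finite_weyl id_in_weyl by (intro Max_in) auto
    then obtain u where "u \<in> W" "u ?\<mu> \<bullet> \<rho> = Max ?F" by auto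
    moreover have "v ?\<mu> \<bullet> \<rho> \<le> Max ?F" if "v \<in> W" for v
      using finite_weyl that by (intro Max_ge) auto
    ultimately show ?thesis using that by auto
  qed
  have "u ?\<mu> \<bullet> \<alpha> > 0" if \<alpha>: "\<alpha> \<in> simple_roots" for \<alpha>
  proof -
    have "refl_root \<alpha> (u ?\<mu>) \<bullet> \<rho> \<le> u ?\<mu> \<bullet> \<rho>"
      using max[OF comp_in_weyl[OF refl_root_in_weyl[OF simple_root_in_roots[OF \<alpha>]] u]] by simp
    moreover have "refl_root \<alpha> (u ?\<mu>) \<bullet> \<rho> = u ?\<mu> \<bullet> \<rho> - u ?\<mu> \<bullet> \<alpha>"
      using inner_refl_root_right[OF simple_root_nonzero[OF \<alpha>], of "u ?\<mu>" \<rho>] refl_simple_rho[OF \<alpha>]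
      by (simp add: inner_diff_right)
    ultimately have ge: "u ?\<mu> \<bullet> \<alpha> \<ge> 0" by simp
    have "u ?\<mu> \<bullet> \<alpha> = ?\<mu> \<bullet> inv u \<alpha>"
      using inner_weyl[OF u, of ?\<mu> "inv u \<alpha>"] u by simp
    also have "\<dots> \<noteq> 0"
      using reg weyl_root[OF inv_weyl(1)[OF u] simple_root_in_roots[OF \<alpha>]] by auto
    finally show ?thesis using ge by simp
  qed
  moreover obtain S' where S': "S' \<subseteq> Rp" "u ?\<mu> = \<rho> - \<Sum>S'"
    using weyl_rho_minus_sum[OF u S] by auto
  ultimately have "\<Sum>S' = 0" using rho_minus_sum_dominant by simp
  then show ?thesis using S' u by auto
qed

lemma alternant_rho_minus_sum:
  assumes S: "S \<subseteq> Rp"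
  shows "\<exists>c. \<forall>y. alternant (\<rho> - \<Sum>S) y = c * alternant \<rho> y"
proof (cases "\<exists>\<beta>\<in>R. (\<rho> - \<Sum>S) \<bullet> \<beta> = 0")
  case True
  then show ?thesis using alternant_singular by (intro exI[of _ 0]) auto
next
  case False
  then obtain u where u: "u \<in> W" "u (\<rho> - \<Sum>S) = \<rho>"
    using rho_minus_sum_conj_rho[OF S] by auto
  have "alternant (\<rho> - \<Sum>S) y = det (matrix u) * alternant \<rho> y" for y
    using alternant_weyl[OF u(1), of "\<rho> - \<Sum>S" y] u(2) det_weyl_square[OF u(1)]
    by (metis mult.assoc mult_1)
  then show ?thesis by blast
qed

lemma card_weyl_mult_weyl_delta_proportional:
  "\<exists>m. \<forall>y. real (card W) * \<delta> y = m * alternant \<rho> y"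
proof -
  have "\<forall>S\<in>Pow Rp. \<exists>c. \<forall>y. alternant (\<rho> - \<Sum>S) y = c * alternant \<rho> y"
    using alternant_rho_minus_sum by blast
  from bchoice[OF this] obtain c
    where c: "\<forall>S\<in>Pow Rp. \<forall>y. alternant (\<rho> - \<Sum>S) y = c S * alternant \<rho> y"
    by blast
  have "real (card W) * \<delta> y = (\<Sum>S\<in>Pow Rp. (-1) ^ card S * c S) * alternant \<rho> y" for y
    unfolding card_weyl_mult_weyl_delta sum_distrib_right
    by (rule sum.cong[OF refl]) (simp add: c)
  then show ?thesis by blast
qed

text \<open>Along the ray \<open>s \<rho>\<close> both sides are dominated by the term \<open>e\<^sup>\<rho>\<close>, since
  \<open>\<rho> \<bullet> \<beta> > 0\<close> for positive \<open>\<beta>\<close> and \<open>w \<rho> \<bullet> \<rho> < \<rho> \<bullet> \<rho>\<close> for \<open>w \<noteq> id\<close>.\<close>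
lemma weyl_delta_rho_asymptotic:
  "((\<lambda>s. \<delta> (s *\<^sub>R \<rho>) * exp (- (s * (\<rho> \<bullet> \<rho>)))) \<longlongrightarrow> 1) at_top"
proof -
  have \<rho>\<rho>: "\<rho> \<bullet> \<rho> = (\<Sum>a\<in>Rp. a \<bullet> \<rho>) / 2"
    by (subst (1) rho_def) (simp only: inner_scaleR_left inner_sum_left)
  have "\<delta> (s *\<^sub>R \<rho>) * exp (- (s * (\<rho> \<bullet> \<rho>))) = (\<Prod>a\<in>Rp. 1 - exp (s * (- (a \<bullet> \<rho>))))" for s
  proof -
    have "exp (- (s * (\<rho> \<bullet> \<rho>))) = (\<Prod>a\<in>Rp. exp (- (s * (a \<bullet> \<rho>)) / 2))"
      unfolding \<rho>\<rho> using finite_positive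
      by (simp add: sum_distrib_left sum_divide_distrib exp_sum flip: sum_negf)
    moreover have "(exp (x / 2) - exp (- (x / 2))) * exp (- (x / 2)) = 1 - exp (- x)" for x :: real
      by (simp add: left_diff_distrib flip: exp_add)
    ultimately show ?thesis
      unfolding weyl_delta_def by (simp add: prod.distrib[symmetric])
  qed
  moreover have "((\<lambda>s. \<Prod>a\<in>Rp. 1 - exp (s * (- (a \<bullet> \<rho>)))) \<longlongrightarrow> (\<Prod>a\<in>Rp. 1 - 0)) at_top"
    using inner_rho_positive
    by (intro tendsto_prod tendsto_diff tendsto_const tendsto_exp_mult_neg_at_top)
       (simp add: inner_commute)
  ultimately show ?thesis by simp
qed

lemma alternant_rho_asymptotic:
  "((\<lambda>s. alternant \<rho> (s *\<^sub>R \<rho>) * exp (- (s * (\<rho> \<bullet> \<rho>)))) \<longlongrightarrow> 1) at_top"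
proof -
  have "alternant \<rho> (s *\<^sub>R \<rho>) * exp (- (s * (\<rho> \<bullet> \<rho>)))
      = (\<Sum>w\<in>W. det (matrix w) * exp (s * (w \<rho> \<bullet> \<rho> - \<rho> \<bullet> \<rho>)))" for s
    unfolding alternant_def sum_distrib_right
    by (rule sum.cong[OF refl]) (simp add: mult.assoc algebra_simps flip: exp_add)
  moreover have "((\<lambda>s. det (matrix w) * exp (s * (w \<rho> \<bullet> \<rho> - \<rho> \<bullet> \<rho>)))
      \<longlongrightarrow> (if w = id then 1 else 0)) at_top" if w: "w \<in> W" for w
  proof (cases "w = id")
    case True
    then show ?thesis by (simp add: matrix_id_mat_1)
  next
    case False
    then have "w \<rho> \<noteq> \<rho>" using weyl_fix_rho_eq_id[OF w] by auto
    then have "0 < (w \<rho> - \<rho>) \<bullet> (w \<rho> - \<rho>)" by simp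
    also have "\<dots> = 2 * (\<rho> \<bullet> \<rho> - w \<rho> \<bullet> \<rho>)"
      using w by (simp add: inner_diff_left inner_diff_right inner_commute)
    finally have "((\<lambda>s. exp (s * (w \<rho> \<bullet> \<rho> - \<rho> \<bullet> \<rho>))) \<longlongrightarrow> 0) at_top"
      by (intro tendsto_exp_mult_neg_at_top) simp
    then show ?thesis using False tendsto_mult_right_zero by auto
  qed
  then have "((\<lambda>s. \<Sum>w\<in>W. det (matrix w) * exp (s * (w \<rho> \<bullet> \<rho> - \<rho> \<bullet> \<rho>)))
      \<longlongrightarrow> (\<Sum>w\<in>W. if w = id then 1 else 0)) at_top"
    by (rule tendsto_sum)
  moreover have "(\<Sum>w\<in>W. if w = id then 1 else (0::real)) = 1"
    using finite_weyl id_in_weyl by simp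
  ultimately show ?thesis by simp
qed

theorem weyl_denominator_formula: "alternant \<rho> y = \<delta> y"
proof -
  obtain m where m: "\<And>y. real (card W) * \<delta> y = m * alternant \<rho> y"
    using card_weyl_mult_weyl_delta_proportional by blast
  let ?e = "\<lambda>s. exp (- (s * (\<rho> \<bullet> \<rho>)))"
  have "((\<lambda>s. real (card W) * (\<delta> (s *\<^sub>R \<rho>) * ?e s)) \<longlongrightarrow> real (card W) * 1) at_top"
    by (intro tendsto_mult tendsto_const weyl_delta_rho_asymptotic)
  moreover have "((\<lambda>s. real (card W) * (\<delta> (s *\<^sub>R \<rho>) * ?e s)) \<longlongrightarrow> m * 1) at_top"
    unfolding mult.assoc[symmetric] m unfolding mult.assoc
    by (intro tendsto_mult tendsto_const alternant_rho_asymptotic)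
  ultimately have "m = real (card W)"
    using tendsto_unique[OF trivial_limit_at_top_linorder] by fastforce
  moreover have "card W > 0" using finite_weyl id_in_weyl card_gt_0_iff by blast
  ultimately show ?thesis using m[of y] by simp
qed

end

section \<open>The Macdonald operator on orbit sums\<close>

lemma exp_inner_translate:
  "q > 0 \<Longrightarrow> exp (\<mu> \<bullet> (y + ln q *\<^sub>R x)) = exp (\<mu> \<bullet> y) * q powr (\<mu> \<bullet> x)"
  by (simp add: inner_add_right powr_def exp_add mult.commute)

lemma one_minus_exp_quotient:
  fixes x L :: real
  assumes x: "x \<noteq> 0"
  shows "(1 - exp L * exp x) / (1 - exp x) =
         exp (L / 2) * (exp ((x + L) / 2) - exp (- ((x + L) / 2))) / (exp (x / 2) - exp (- (x / 2)))"
proof -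
  define A where "A = exp (x / 2)"
  define B where "B = exp (L / 2)"
  have A: "A > 0" and B: "B > 0" unfolding A_def B_def by auto
  have ex: "exp x = A * A" and eL: "exp L = B * B" and exL: "exp ((x + L) / 2) = A * B"
    unfolding A_def B_def by (simp_all flip: exp_add add: add_divide_distrib)
  have em: "exp (- (x / 2)) = 1 / A" and emL: "exp (- ((x + L) / 2)) = 1 / (A * B)"
    using exL unfolding A_def by (simp_all add: exp_minus field_simps)
  have "1 - A * A \<noteq> 0" using x ex by (metis exp_eq_one_iff eq_iff_diff_eq_0)
  moreover have "A - 1 / A \<noteq> 0" using calculation A by (simp add: field_simps)
  ultimately show ?thesis
    unfolding ex eL em exL emL B_def[symmetric] A_def[symmetric] using A B by (simp add: field_simps)
qed

context root_sys
begin

text \<open>Substituting \<open>v = w \<circ> u\<close> and \<open>\<mu>' = w \<nu>\<close> decouples the two sums over \<open>W\<close>.\<close>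
lemma sum_alternant_sym_monomial:
  assumes q: "q > 0" and t: "t > 0"
  shows "(\<Sum>v\<in>W. alternant \<mu> (y + ln t *\<^sub>R v p) * sym_monomial R l (y + ln q *\<^sub>R v p))
       = (\<Sum>\<nu>\<in>worbit R l. (\<Sum>u\<in>W. t powr (u p \<bullet> \<mu>) * q powr (u p \<bullet> \<nu>)) * alternant (\<nu> + \<mu>) y)"
    (is "?lhs = ?rhs")
proof -
  let ?O = "worbit R l"
  define G where "G v w \<mu>' = det (matrix w) * exp (w \<mu> \<bullet> y) * t powr (w \<mu> \<bullet> v p)
    * (exp (\<mu>' \<bullet> y) * q powr (\<mu>' \<bullet> v p))" for v w :: "real^'n \<Rightarrow> real^'n" and \<mu>'
  define c where "c \<nu> u = t powr (u p \<bullet> \<mu>) * q powr (u p \<bullet> \<nu>)" for \<nu> and u :: "real^'n \<Rightarrow> real^'n"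
  have G_reindex: "G (w \<circ> u) w (w \<nu>) = c \<nu> u * (det (matrix w) * exp (w (\<nu> + \<mu>) \<bullet> y))"
    if w: "w \<in> W" for w u \<nu>
  proof -
    have "exp (w (\<nu> + \<mu>) \<bullet> y) = exp (w \<nu> \<bullet> y) * exp (w \<mu> \<bullet> y)"
      using linear_weyl[OF w] by (simp add: linear_add inner_add_left exp_add)
    moreover have "w \<mu> \<bullet> (w \<circ> u) p = u p \<bullet> \<mu>" "w \<nu> \<bullet> (w \<circ> u) p = u p \<bullet> \<nu>"
      using w by (simp_all add: inner_commute)
    ultimately show ?thesis unfolding G_def c_def by (simp only: mult_ac)
  qed
  have "?lhs = (\<Sum>v\<in>W. \<Sum>w\<in>W. \<Sum>\<mu>'\<in>?O. G v w \<mu>')"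
    unfolding alternant_def sym_monomial_def sum_product G_def
    using q t by (simp add: exp_inner_translate mult.assoc)
  also have "\<dots> = (\<Sum>w\<in>W. \<Sum>v\<in>W. \<Sum>\<mu>'\<in>?O. G v w \<mu>')"
    by (rule sum.swap)
  also have "\<dots> = (\<Sum>w\<in>W. \<Sum>u\<in>W. \<Sum>\<nu>\<in>?O. G (w \<circ> u) w (w \<nu>))"
  proof (rule sum.cong[OF refl])
    fix w assume w: "w \<in> W"
    have "(\<Sum>\<mu>'\<in>?O. G v w \<mu>') = (\<Sum>\<nu>\<in>?O. G v w (w \<nu>))" for v
      using sum.reindex_bij_betw[OF bij_betw_weyl_worbit[OF w], of "G v w"] by simp
    then show "(\<Sum>v\<in>W. \<Sum>\<mu>'\<in>?O. G v w \<mu>') = (\<Sum>u\<in>W. \<Sum>\<nu>\<in>?O. G (w \<circ> u) w (w \<nu>))"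
      using sum.reindex_bij_betw[OF bij_betw_weyl_mult_left[OF w],
          of "\<lambda>v. \<Sum>\<nu>\<in>?O. G v w (w \<nu>)"] by simp
  qed
  also have "\<dots> = (\<Sum>w\<in>W. \<Sum>u\<in>W. \<Sum>\<nu>\<in>?O. c \<nu> u * (det (matrix w) * exp (w (\<nu> + \<mu>) \<bullet> y)))"
    by (simp add: G_reindex)
  also have "\<dots> = ?rhs"
    unfolding alternant_def c_def sum_distrib_left sum_distrib_right
    by (subst sum.swap) (simp add: sum.swap[of _ W ?O])
  finally show ?thesis .
qed

end

context positive_root_sys
begin

lemma prod_macdonald_factor:
  assumes t: "t > 0" and z: "\<forall>a\<in>Rp. a \<bullet> z \<noteq> 0"
  shows "(\<Prod>a\<in>Rp. (1 - t powr (p \<bullet> a) * exp (a \<bullet> z)) / (1 - exp (a \<bullet> z)))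
         = t powr (p \<bullet> \<rho>) * \<delta> (z + ln t *\<^sub>R p) / \<delta> z"
proof -
  let ?L = "\<lambda>a. (p \<bullet> a) * ln t"
  let ?f = "\<lambda>x::real. exp (x / 2) - exp (- (x / 2))"
  have "(\<Prod>a\<in>Rp. (1 - t powr (p \<bullet> a) * exp (a \<bullet> z)) / (1 - exp (a \<bullet> z)))
      = (\<Prod>a\<in>Rp. exp (?L a / 2) * ?f (a \<bullet> z + ?L a) / ?f (a \<bullet> z))"
  proof (rule prod.cong[OF refl])
    fix a assume "a \<in> Rp"
    then show "(1 - t powr (p \<bullet> a) * exp (a \<bullet> z)) / (1 - exp (a \<bullet> z))
        = exp (?L a / 2) * ?f (a \<bullet> z + ?L a) / ?f (a \<bullet> z)"
      using one_minus_exp_quotient[of "a \<bullet> z" "?L a"] z t by (simp add: powr_def)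
  qed
  also have "\<dots> = (\<Prod>a\<in>Rp. exp (?L a / 2)) * (\<Prod>a\<in>Rp. ?f (a \<bullet> z + ?L a)) / (\<Prod>a\<in>Rp. ?f (a \<bullet> z))"
    by (simp add: prod_dividef prod.distrib)
  also have "(\<Prod>a\<in>Rp. exp (?L a / 2)) = t powr (p \<bullet> \<rho>)"
  proof -
    have "p \<bullet> \<rho> = (\<Sum>a\<in>Rp. p \<bullet> a) / 2"
      by (subst (1) rho_def) (simp only: inner_scaleR_right inner_sum_right)
    then show ?thesis
      using t finite_positive by (simp add: powr_def sum_divide_distrib sum_distrib_right exp_sum)
  qed
  also have "(\<Prod>a\<in>Rp. ?f (a \<bullet> z + ?L a)) = \<delta> (z + ln t *\<^sub>R p)"
    unfolding weyl_delta_def by (rule prod.cong[OF refl]) (simp add: inner_add_right inner_commute algebra_simps)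
  also have "(\<Prod>a\<in>Rp. ?f (a \<bullet> z)) = \<delta> z"
    unfolding weyl_delta_def by simp
  finally show ?thesis .
qed

text \<open>Transport by \<open>v\<inverse>\<close>: the factor indexed by \<open>v\<close> is the one for \<open>id\<close> at the point
  \<open>v\<inverse> y\<close>, and \<open>\<delta>\<close> changes there by the sign \<open>det v\<close> twice.\<close>
lemma prod_macdonald_factor_weyl:
  assumes t: "t > 0" and y: "\<forall>a\<in>R. a \<bullet> y \<noteq> 0" and v: "v \<in> W"
  shows "(\<Prod>a\<in>Rp. (1 - t powr (p \<bullet> a) * exp (v a \<bullet> y)) / (1 - exp (v a \<bullet> y)))
         = t powr (p \<bullet> \<rho>) * alternant \<rho> (y + ln t *\<^sub>R v p) / \<delta> y"
proof -
  define z where "z = inv v y"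
  have vz: "v a \<bullet> y = a \<bullet> z" for a
    using inner_weyl[OF v, of a z] v unfolding z_def by simp
  have z: "\<forall>a\<in>Rp. a \<bullet> z \<noteq> 0"
    using y weyl_root[OF v] positive_subset_roots vz by (metis subsetD)
  have shift: "z + ln t *\<^sub>R p = inv v (y + ln t *\<^sub>R v p)"
    unfolding z_def using linear_weyl[OF inv_weyl(1)[OF v]] v by (simp add: linear_add linear_scale)
  have "(\<Prod>a\<in>Rp. (1 - t powr (p \<bullet> a) * exp (v a \<bullet> y)) / (1 - exp (v a \<bullet> y)))
      = t powr (p \<bullet> \<rho>) * \<delta> (z + ln t *\<^sub>R p) / \<delta> z"
    unfolding vz by (rule prod_macdonald_factor[OF t z])
  also have "\<delta> (z + ln t *\<^sub>R p) = det (matrix v) * \<delta> (y + ln t *\<^sub>R v p)"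
    unfolding shift using weyl_delta_weyl[OF inv_weyl(1)[OF v]] det_inv_weyl[OF v] by simp
  also have "\<delta> z = det (matrix v) * \<delta> y"
    unfolding z_def using weyl_delta_weyl[OF inv_weyl(1)[OF v]] det_inv_weyl[OF v] by simp
  finally show ?thesis
    using det_weyl[OF v] weyl_denominator_formula by auto
qed

lemma macdonald_op_eq_sum_alternant:
  assumes t: "t > 0" and y: "\<forall>a\<in>R. a \<bullet> y \<noteq> 0"
  shows "macdonald_op R Rp p q t f y = t powr (p \<bullet> \<rho>) / (real (card (wstab R p)) * \<delta> y)
    * (\<Sum>v\<in>W. alternant \<rho> (y + ln t *\<^sub>R v p) * f (y + ln q *\<^sub>R v p))"
  unfolding macdonald_op_def sum_distrib_left
  by (rule sum.cong[OF refl]) (simp add: prod_macdonald_factor_weyl[OF t y])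

theorem macdonald_op_sym_monomial:
  assumes q: "q > 0" and t: "t > 0" and y: "\<forall>a\<in>R. a \<bullet> y \<noteq> 0"
  shows "macdonald_op R Rp p q t (sym_monomial R l) y =
     t powr (p \<bullet> \<rho>) *
     (\<Sum>\<nu>\<in>worbit R l. (\<Sum>s\<in>worbit R p. t powr (s \<bullet> \<rho>) * q powr (s \<bullet> \<nu>)) * weyl_char R Rp \<nu> y)"
proof -
  let ?c = "real (card (wstab R p))"
  have "weyl_char R Rp \<nu> y = alternant (\<nu> + \<rho>) y / \<delta> y" for \<nu>
    unfolding weyl_char_def alternant_def ..
  moreover have "(\<Sum>s\<in>worbit R p. t powr (s \<bullet> \<rho>) * q powr (s \<bullet> \<nu>))
      = (\<Sum>u\<in>W. t powr (u p \<bullet> \<rho>) * q powr (u p \<bullet> \<nu>)) / ?c" for \<nu>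
    using sum_weyl_apply_eq_orbit[of "\<lambda>s. t powr (s \<bullet> \<rho>) * q powr (s \<bullet> \<nu>)" p] card_wstab_pos[of p]
    by simp
  ultimately show ?thesis
    unfolding macdonald_op_eq_sum_alternant[OF t y] sum_alternant_sym_monomial[OF q t]
    by (simp add: sum_distrib_left sum_divide_distrib mult_ac)
qed

end

theorem mainTheorem8:
  fixes R Rp :: "(real^'n) set" and p l y :: "real^'n" and q t :: real
  assumes "root_system R" and "reduced_rs R" and "irreducible_rs R"
    and "positive_system R Rp"
    and "dual_minuscule Rp p"
    and "q > 0" and "t > 0"
    and "l \<in> dominant_weights R Rp"
    and "\<forall>a\<in>R. a \<bullet> y \<noteq> 0"
  shows "macdonald_op R Rp p q t (sym_monomial R l) y =
     t powr (p \<bullet> rho Rp) *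
     (\<Sum>v\<in>worbit R l. (\<Sum>s\<in>worbit R p. t powr (s \<bullet> rho Rp) * q powr (s \<bullet> v)) * weyl_char R Rp v y)"
proof -
  obtain g where "\<forall>a\<in>R. a \<bullet> g \<noteq> 0" "Rp = {a\<in>R. a \<bullet> g > 0}"
    using assms(4) unfolding positive_system_def by blast
  then interpret positive_root_sys R Rp g
    using assms(1,2) by unfold_locales auto
  show ?thesis
    by (rule macdonald_op_sym_monomial[OF assms(6,7,9)])
qed

end
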